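(* Let $V$ be a countable set, $\Omega_0$ a finite set, $\Omega=\Omega_0^V$, $q\in\mathbb N$, and let $\gamma$ be a quasilocal $q$-specification. Then $\mathcal G_q(\gamma)$ is a closed subset of the space $\mathcal M_1(\Omega,\mathcal F)$ of probability measures on $\Omega$ equipped with the weak topology.
   Context: $\Omega$ carries the product $\sigma$-algebra $\mathcal F$ and the topology of coordinatewise convergence (a compact metrizable space); the weak topology on $\mathcal M_1(\Omega,\mathcal F)$ is the one induced by integration against continuous functions. For $\Delta\subset V$, $\mathcal F_\Delta$ is the $\sigma$-algebra generated by coordinates in $\Delta$, $\mathcal F^q_{\Lambda^c}=(\mathcal F_{\Lambda^c})^{\otimes q}$. A probability $q$-kernel is a map $\gamma_\Lambda:\mathcal F\times\Omega^q\to[0,1]$ with $\gamma_\Lambda(\cdot\mid\eta_1,\dots,\eta_q)$ a probability measure and $\gamma_\Lambda(A\mid\cdot)$ $\mathcal F^q_{\Lambda^c}$-measurable; proper means $\gamma_\Lambda(A\mid\eta_1,\dots,\eta_q)=\frac1q\sum_i\mathbf 1_A(\eta_i)$ for $A\in\mathcal F_{\Lambda^c}$. Composition: $(\gamma_\Delta\gamma_\Lambda)(A\mid\eta)=\int_{\Omega^q}\gamma_\Lambda(A\mid\zeta_1,\dots,\zeta_q)\prod_i\gamma_\Delta(d\zeta_i\mid\eta)$. A $q$-specification is a family of proper probability $q$-kernels $(\gamma_\Lambda)_{\Lambda\Subset V}$ with $\gamma_\Delta\gamma_\Lambda=\gamma_\Delta$ for $\Lambda\subset\Delta\Subset V$;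 it is quasilocal if for each $\Lambda\Subset V$ and every $A\in\mathcal F_\Lambda$ the map $(\omega_1,\dots,\omega_q)\mapsto\gamma_\Lambda(A\mid\omega_1,\dots,\omega_q)$ is continuous on $\Omega^q$. $\mu^{\otimes q}\gamma_\Lambda(A)=\int_{\Omega^q}\gamma_\Lambda(A\mid\eta_1,\dots,\eta_q)\prod_i\mu(d\eta_i)$, and $\mathcal G_q(\gamma)=\{\mu\in\mathcal M_1(\Omega,\mathcal F):\mu^{\otimes q}\gamma_\Lambda=\mu\ \forall\Lambda\Subset V\}$. *)

theory Defs
  imports "HOL-Probability.Probability"
begin

text \<open>Configuration space Omega = Omega0^V, modelled as the function type 'v => 'a,
  with 'v countable (V) and 'a finite (Omega0). q-tuples of configurations are
  functions nat => ('v => 'a), of which only the indices < q matter.\<close>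

definition Fprod :: "('v \<Rightarrow> 'a) measure" where
  "Fprod = PiM UNIV (\<lambda>_. count_space UNIV)"

definition Fsub :: "'v set \<Rightarrow> ('v \<Rightarrow> 'a) measure" where
  "Fsub \<Delta> = sigma UNIV {{\<omega>. \<omega> x = a} | x a. x \<in> \<Delta>}"

definition Omega_top :: "('v \<Rightarrow> 'a) topology" where
  "Omega_top = product_topology (\<lambda>_. discrete_topology UNIV) UNIV"

definition Omega_q_top :: "nat \<Rightarrow> (nat \<Rightarrow> 'v \<Rightarrow> 'a) topology" where
  "Omega_q_top q = product_topology (\<lambda>_. Omega_top) {..<q}"

definition Omega_q :: "nat \<Rightarrow> (nat \<Rightarrow> 'v \<Rightarrow> 'a) set" where
  "Omega_q q = PiE {..<q} (\<lambda>_. UNIV)"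

definition prob_q_kernel ::
  "nat \<Rightarrow> 'v set \<Rightarrow> ((nat \<Rightarrow> 'v \<Rightarrow> 'a) \<Rightarrow> ('v \<Rightarrow> 'a) measure) \<Rightarrow> bool" where
  "prob_q_kernel q \<Lambda> k \<longleftrightarrow>
     (\<forall>\<eta>\<in>Omega_q q. prob_space (k \<eta>) \<and> sets (k \<eta>) = sets Fprod) \<and>
     (\<forall>A\<in>sets Fprod. (\<lambda>\<eta>. measure (k \<eta>) A)
        \<in> borel_measurable (PiM {..<q} (\<lambda>_. Fsub (- \<Lambda>))))"

definition proper_q_kernel ::
  "nat \<Rightarrow> 'v set \<Rightarrow> ((nat \<Rightarrow> 'v \<Rightarrow> 'a) \<Rightarrow> ('v \<Rightarrow> 'a) measure) \<Rightarrow> bool" where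
  "proper_q_kernel q \<Lambda> k \<longleftrightarrow>
     (\<forall>\<eta>\<in>Omega_q q. \<forall>A\<in>sets (Fsub (- \<Lambda>)).
        measure (k \<eta>) A = (1 / real q) * (\<Sum>i<q. indicator A (\<eta> i)))"

definition kernel_comp ::
  "nat \<Rightarrow> ((nat \<Rightarrow> 'v \<Rightarrow> 'a) \<Rightarrow> ('v \<Rightarrow> 'a) measure)
       \<Rightarrow> ((nat \<Rightarrow> 'v \<Rightarrow> 'a) \<Rightarrow> ('v \<Rightarrow> 'a) measure)
       \<Rightarrow> ('v \<Rightarrow> 'a) set \<Rightarrow> (nat \<Rightarrow> 'v \<Rightarrow> 'a) \<Rightarrow> real" where
  "kernel_comp q kD kL A \<eta> =
     integral\<^sup>L (PiM {..<q} (\<lambda>_. kD \<eta>)) (\<lambda>\<zeta>. measure (kL \<zeta>) A)"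

definition q_specification ::
  "nat \<Rightarrow> ('v set \<Rightarrow> (nat \<Rightarrow> 'v \<Rightarrow> 'a) \<Rightarrow> ('v \<Rightarrow> 'a) measure) \<Rightarrow> bool" where
  "q_specification q \<gamma> \<longleftrightarrow>
     (\<forall>\<Lambda>. finite \<Lambda> \<longrightarrow> prob_q_kernel q \<Lambda> (\<gamma> \<Lambda>) \<and> proper_q_kernel q \<Lambda> (\<gamma> \<Lambda>)) \<and>
     (\<forall>\<Lambda> \<Delta>. \<Lambda> \<subseteq> \<Delta> \<and> finite \<Delta> \<longrightarrow>
        (\<forall>\<eta>\<in>Omega_q q. \<forall>A\<in>sets Fprod.
           kernel_comp q (\<gamma> \<Delta>) (\<gamma> \<Lambda>) A \<eta> = measure (\<gamma> \<Delta> \<eta>) A))"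

definition quasilocal ::
  "nat \<Rightarrow> ('v set \<Rightarrow> (nat \<Rightarrow> 'v \<Rightarrow> 'a) \<Rightarrow> ('v \<Rightarrow> 'a) measure) \<Rightarrow> bool" where
  "quasilocal q \<gamma> \<longleftrightarrow>
     (\<forall>\<Lambda>. finite \<Lambda> \<longrightarrow> (\<forall>A\<in>sets (Fsub \<Lambda>).
        continuous_map (Omega_q_top q) euclideanreal (\<lambda>\<eta>. measure (\<gamma> \<Lambda> \<eta>) A)))"

definition M1 :: "('v \<Rightarrow> 'a) measure set" where
  "M1 = {\<mu>. prob_space \<mu> \<and> sets \<mu> = sets Fprod}"

definition weak_top :: "('v \<Rightarrow> 'a) measure topology" where
  "weak_top = topology_generated_by
     {{\<mu> \<in> M1. integral\<^sup>L \<mu> f \<in> U} | f U.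
        continuous_map Omega_top euclideanreal f \<and> open U}"

definition Gq ::
  "nat \<Rightarrow> ('v set \<Rightarrow> (nat \<Rightarrow> 'v \<Rightarrow> 'a) \<Rightarrow> ('v \<Rightarrow> 'a) measure) \<Rightarrow> ('v \<Rightarrow> 'a) measure set" where
  "Gq q \<gamma> = {\<mu> \<in> M1. \<forall>\<Lambda>. finite \<Lambda> \<longrightarrow> (\<forall>A\<in>sets Fprod.
      integral\<^sup>L (PiM {..<q} (\<lambda>_. \<mu>)) (\<lambda>\<eta>. measure (\<gamma> \<Lambda> \<eta>) A) = measure \<mu> A)}"

end

theory Submission
  imports Defs
begin

text \<open>Write \<open>\<gamma>\<^sub>\<Lambda>(A|\<omega>)\<close> for the kernel evaluated at the constant tuple \<open>(\<omega>, \<dots>, \<omega>)\<close>.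
  The key identity is \<open>\<gamma>\<^sub>\<Lambda>(A|\<eta>\<^sub>1, \<dots>, \<eta>\<^sub>q) = (1/q) \<Sum>\<^sub>i \<gamma>\<^sub>\<Lambda>(A|\<eta>\<^sub>i)\<close>. The difference of
  its two sides is bounded, depends on \<open>\<eta>\<close> only through the configurations off \<open>\<Lambda>\<close>, vanishes
  on constant tuples and, by consistency and properness, is harmonic for the Markov chain
  \<open>\<eta> \<mapsto> \<gamma>\<^sub>\<Lambda>(\<cdot>|\<eta>)\<^sup>\<otimes>\<^sup>q\<close>. From \<open>\<eta>\<close> this chain only visits tuples whose components lie in the
  fibers (configurations agreeing off \<open>\<Lambda>\<close>) of the \<open>\<eta>\<^sub>i\<close>, on which the difference takes finitely
  many values; by properness it jumps with positive probability to a tuple inside a single fiber, where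
  the difference vanishes, so a maximum principle forces it to be \<open>0\<close>.

  Hence \<open>\<mu>\<^sup>\<otimes>\<^sup>q\<gamma>\<^sub>\<Lambda>(A) = \<integral> \<gamma>\<^sub>\<Lambda>(A|\<cdot>) d\<mu>\<close>, and since \<open>A \<mapsto> \<integral> \<gamma>\<^sub>\<Lambda>(A|\<cdot>) d\<mu>\<close> is a probability measure,
  \<open>\<mu> \<in> G\<^sub>q(\<gamma>)\<close> iff \<open>\<integral> (\<gamma>\<^sub>\<Lambda>(A|\<cdot>) - 1\<^sub>A) d\<mu> = 0\<close> for all finite \<open>\<Lambda>\<close> and all cylinder sets \<open>A\<close>.
  For a cylinder \<open>A\<close>, properness factors \<open>\<gamma>\<^sub>\<Lambda>(A|\<omega>)\<close> into the indicator of the part of \<open>A\<close> off \<open>\<Lambda>\<close>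
  times \<open>\<gamma>\<^sub>\<Lambda>\<close> of the part inside \<open>\<Lambda>\<close>, which is continuous by quasilocality. So \<open>G\<^sub>q(\<gamma>)\<close> is an
  intersection of zero sets of weakly continuous functionals \<open>\<mu> \<mapsto> \<integral> f d\<mu>\<close>.\<close>

lemma sigma_sets_mem_iff_indistinguishable:
  assumes "X \<in> sigma_sets \<Omega> G" and "\<And>g. g \<in> G \<Longrightarrow> x \<in> g \<longleftrightarrow> y \<in> g" and "x \<in> \<Omega>" "y \<in> \<Omega>"
  shows "x \<in> X \<longleftrightarrow> y \<in> X"
  using assms(1) by induct (auto simp: assms)

lemma space_Fprod [simp]: "space (Fprod :: ('v \<Rightarrow> 'a) measure) = UNIV"
  by (simp add: Fprod_def space_PiM)

lemma space_Fsub [simp]: "space (Fsub S :: ('v \<Rightarrow> 'a) measure) = UNIV"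
  by (simp add: Fsub_def)

lemma sets_Fsub:
  "sets (Fsub S :: ('v \<Rightarrow> 'a) measure) = sigma_sets UNIV {{\<omega>. \<omega> x = a} | x a. x \<in> S}"
  unfolding Fsub_def by (rule sets_measure_of) auto

lemma coordinate_in_Fsub: "x \<in> S \<Longrightarrow> {\<omega>. \<omega> x = a} \<in> sets (Fsub S)"
  unfolding sets_Fsub by (rule sigma_sets.Basic) blast

lemma Fsub_mem_iff:
  assumes "A \<in> sets (Fsub S)" and "\<And>x. x \<in> S \<Longrightarrow> \<omega> x = \<omega>' x"
  shows "\<omega> \<in> A \<longleftrightarrow> \<omega>' \<in> A"
  using assms(1) unfolding sets_Fsub
  by (rule sigma_sets_mem_iff_indistinguishable) (auto simp: assms(2))

lemma PiM_Fsub_mem_iff: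
  fixes \<eta> \<eta>' :: "'i \<Rightarrow> 'v \<Rightarrow> 'a"
  assumes "X \<in> sets (PiM I (\<lambda>_. Fsub S :: ('v \<Rightarrow> 'a) measure))"
    and "\<eta> \<in> PiE I (\<lambda>_. UNIV)" "\<eta>' \<in> PiE I (\<lambda>_. UNIV)"
    and "\<And>i x. i \<in> I \<Longrightarrow> x \<in> S \<Longrightarrow> \<eta> i x = \<eta>' i x"
  shows "\<eta> \<in> X \<longleftrightarrow> \<eta>' \<in> X"
  using assms(1) unfolding sets_PiM
proof (rule sigma_sets_mem_iff_indistinguishable)
  fix G assume "G \<in> prod_algebra I (\<lambda>_. Fsub S :: ('v \<Rightarrow> 'a) measure)"
  then show "\<eta> \<in> G \<longleftrightarrow> \<eta>' \<in> G"
  proof (rule prod_algebraE)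
    fix J E assume G: "G = prod_emb I (\<lambda>_. Fsub S) J (PiE J E)" and J: "J \<subseteq> I"
      and E: "\<And>i. i \<in> J \<Longrightarrow> E i \<in> sets (Fsub S)"
    have "\<eta> i \<in> E i \<longleftrightarrow> \<eta>' i \<in> E i" if "i \<in> J" for i
      using that J by (intro Fsub_mem_iff[OF E]) (auto simp: assms(4))
    then show ?thesis using assms(2,3) J by (auto simp: G prod_emb_iff PiE_iff)
  qed
qed (use assms in \<open>auto simp: space_PiM\<close>)

lemma borel_measurable_PiM_Fsub_eq:
  assumes f: "f \<in> borel_measurable (PiM I (\<lambda>_. Fsub S))"
    and "\<eta> \<in> PiE I (\<lambda>_. UNIV)" "\<eta>' \<in> PiE I (\<lambda>_. UNIV)"
    and "\<And>i x. i \<in> I \<Longrightarrow> x \<in> S \<Longrightarrow> \<eta> i x = \<eta>' i x"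
  shows "f \<eta> = (f \<eta>' :: real)"
proof -
  let ?X = "f -` {f \<eta>} \<inter> space (PiM I (\<lambda>_. Fsub S))"
  have "?X \<in> sets (PiM I (\<lambda>_. Fsub S))"
    by (rule measurable_sets[OF f]) simp
  moreover have "\<eta> \<in> ?X"
    using assms(2) by (simp add: space_PiM)
  ultimately have "\<eta>' \<in> ?X"
    using PiM_Fsub_mem_iff[OF _ assms(2-4)] by blast
  then show ?thesis by simp
qed

lemma cylinder_in_Fsub:
  assumes "J \<subseteq> S"
  shows "{\<omega>. \<forall>j\<in>J. \<omega> j \<in> E j} \<in> sets (Fsub S :: ('v::countable \<Rightarrow> 'a::finite) measure)"
proof -
  have "{\<omega>. \<forall>j\<in>J. \<omega> j \<in> E j} = (\<Inter>j\<in>J. \<Union>a\<in>E j. {\<omega>. \<omega> j = a})" by auto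
  also have "\<dots> \<in> sets (Fsub S)"
    using assms sets.top[of "Fsub S"]
    by (intro sets.countable_INT'' sets.finite_UN coordinate_in_Fsub) auto
  finally show ?thesis .
qed

lemma sets_Fsub_subset_Fprod: "sets (Fsub S) \<subseteq> sets (Fprod :: ('v \<Rightarrow> 'a) measure)"
proof -
  have "{\<omega>. \<omega> x = a} \<in> sets (Fprod :: ('v \<Rightarrow> 'a) measure)" for x a
  proof -
    have "(\<lambda>\<omega>. \<omega> x) -` {a} \<inter> space Fprod \<in> sets (Fprod :: ('v \<Rightarrow> 'a) measure)"
      unfolding Fprod_def by (rule measurable_sets[OF measurable_component_singleton]) auto
    then show ?thesis by (simp add: vimage_def)
  qed
  then have "{{\<omega>. \<omega> x = a} | x a. x \<in> S} \<subseteq> sets (Fprod :: ('v \<Rightarrow> 'a) measure)"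
    by auto
  from sigma_algebra.sigma_sets_subset[OF sets.sigma_algebra_axioms this]
  show ?thesis by (simp add: sets_Fsub)
qed

lemma measurable_id_Fprod_Fsub: "(\<lambda>\<omega>. \<omega>) \<in> measurable Fprod (Fsub S)"
  by (rule measurableI) (use sets_Fsub_subset_Fprod in auto)

lemma borel_measurable_PiM_Fsub_imp_Fprod:
  assumes "f \<in> borel_measurable (PiM I (\<lambda>_. Fsub S))"
  shows "f \<in> borel_measurable (PiM I (\<lambda>_. Fprod))"
proof -
  have "(\<lambda>\<eta>. \<eta>) \<in> measurable (PiM I (\<lambda>_. Fprod)) (PiM I (\<lambda>_. Fsub S))"
  proof (rule measurable_PiM_single')
    fix i assume "i \<in> I"
    show "(\<lambda>\<eta>. \<eta> i) \<in> measurable (PiM I (\<lambda>_. Fprod)) (Fsub S)"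
      using measurable_compose[OF measurable_component_singleton[OF \<open>i \<in> I\<close>]
          measurable_id_Fprod_Fsub] .
  qed (auto simp: space_PiM)
  from measurable_comp[OF this assms] show ?thesis by (simp add: o_def)
qed

abbreviation cylinders :: "('v \<Rightarrow> 'a) set set" where
  "cylinders \<equiv> prod_algebra UNIV (\<lambda>_. count_space UNIV)"

lemma sets_Fprod_eq_sigma_cylinders: "sets Fprod = sigma_sets UNIV cylinders"
  unfolding Fprod_def sets_PiM by simp

lemma cylinders_subset_sets_Fprod: "cylinders \<subseteq> sets Fprod"
  unfolding sets_Fprod_eq_sigma_cylinders by (rule sigma_sets_superset_generator)

lemma UNIV_in_cylinders: "UNIV \<in> cylinders"
  using space_in_prod_algebra[of UNIV "\<lambda>_. count_space UNIV"] by (simp add: space_PiM)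

lemma cylindersE:
  assumes "A \<in> cylinders"
  obtains J E where "finite J" "A = {\<omega>. \<forall>j\<in>J. \<omega> j \<in> E j}"
  using assms
proof (rule prod_algebraE)
  fix J E assume "A = prod_emb UNIV (\<lambda>_. count_space UNIV) J (PiE J E)" "finite J"
  then show thesis by (intro that[of J E]) (auto simp: prod_emb_def PiE_iff)
qed

definition fiber :: "'v set \<Rightarrow> ('v \<Rightarrow> 'a) \<Rightarrow> ('v \<Rightarrow> 'a) set" where
  "fiber \<Lambda> \<omega> = {\<omega>'. \<forall>x\<in>-\<Lambda>. \<omega>' x = \<omega> x}"

lemma mem_fiber_self [simp]: "\<omega> \<in> fiber \<Lambda> \<omega>"
  by (simp add: fiber_def)

lemma fiber_eq: "\<omega> \<in> fiber \<Lambda> \<omega>' \<Longrightarrow> fiber \<Lambda> \<omega> = fiber \<Lambda> \<omega>'"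
  by (auto simp: fiber_def)

lemma mem_fiber_trans: "\<omega> \<in> fiber \<Lambda> \<omega>' \<Longrightarrow> \<omega>' \<in> fiber \<Lambda> \<omega>'' \<Longrightarrow> \<omega> \<in> fiber \<Lambda> \<omega>''"
  by (simp add: fiber_def)

lemma sum_indicator_fiber_ge_1:
  fixes \<eta> :: "nat \<Rightarrow> 'v \<Rightarrow> 'a"
  assumes "i < n"
  shows "1 \<le> (\<Sum>j<n. indicator (fiber \<Lambda> (\<eta> i)) (\<eta> j) :: real)"
proof -
  have "indicator (fiber \<Lambda> (\<eta> i)) (\<eta> i) \<le> (\<Sum>j<n. indicator (fiber \<Lambda> (\<eta> i)) (\<eta> j) :: real)"
    using assms by (intro member_le_sum) auto
  then show ?thesis by simp
qed

text \<open>A partition of unity along the fibers of the components of \<open>\<eta>\<close>: each fiber is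
  weighted by the inverse of the number of components it contains.\<close>

lemma local_eq_sum_fibers:
  fixes h :: "('v \<Rightarrow> 'a) \<Rightarrow> real" and \<eta> :: "nat \<Rightarrow> 'v \<Rightarrow> 'a"
  assumes h_local: "\<And>\<omega> \<omega>'. \<omega>' \<in> fiber \<Lambda> \<omega> \<Longrightarrow> h \<omega>' = h \<omega>"
    and k: "k < n" "\<omega> \<in> fiber \<Lambda> (\<eta> k)"
  shows "h \<omega> = (\<Sum>i<n. h (\<eta> i) / (\<Sum>j<n. indicator (fiber \<Lambda> (\<eta> i)) (\<eta> j))
      * indicator (fiber \<Lambda> (\<eta> i)) \<omega>)"
proof -
  let ?E = "\<lambda>i. fiber \<Lambda> (\<eta> i)"
  define N where "N i = (\<Sum>j<n. indicator (?E i) (\<eta> j) :: real)" for i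
  have "h (\<eta> i) / N i * indicator (?E i) \<omega> = h \<omega> / N k * indicator (?E k) (\<eta> i)" for i
  proof (cases "\<omega> \<in> ?E i")
    case True
    then have E: "?E i = ?E k" using fiber_eq[OF True] fiber_eq[OF k(2)] by simp
    moreover have "\<eta> i \<in> ?E k" using mem_fiber_self[of "\<eta> i" \<Lambda>] E by simp
    ultimately show ?thesis using True h_local[OF True] by (simp add: N_def)
  next
    case False
    have "\<eta> i \<notin> ?E k"
    proof
      assume "\<eta> i \<in> ?E k"
      then have "?E i = ?E k" by (rule fiber_eq)
      with k(2) False show False by simp
    qed
    then show ?thesis using False by simp
  qed
  then have "(\<Sum>i<n. h (\<eta> i) / N i * indicator (?E i) \<omega>) = h \<omega> / N k * N k"
    by (simp add: N_def sum_distrib_left)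
  then show ?thesis
    using sum_indicator_fiber_ge_1[OF k(1), of \<Lambda> \<eta>] by (simp add: N_def)
qed

lemma fiber_in_Fsub: "fiber \<Lambda> \<omega> \<in> sets (Fsub (- \<Lambda>) :: ('v::countable \<Rightarrow> 'a::finite) measure)"
  using cylinder_in_Fsub[of "- \<Lambda>" "- \<Lambda>" "\<lambda>x. {\<omega> x}"] by (simp add: fiber_def)

lemma integral_PiM_component:
  fixes f :: "'b \<Rightarrow> real"
  assumes "prob_space M" "j \<in> I" "f \<in> borel_measurable M"
  shows "integral\<^sup>L (PiM I (\<lambda>_. M)) (\<lambda>\<zeta>. f (\<zeta> j)) = integral\<^sup>L M f"
proof -
  have "integral\<^sup>L M f = integral\<^sup>L (distr (PiM I (\<lambda>_. M)) M (\<lambda>\<zeta>. \<zeta> j)) f"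
    using distr_PiM_component[of I "\<lambda>_. M" j] assms by simp
  also have "\<dots> = integral\<^sup>L (PiM I (\<lambda>_. M)) (\<lambda>\<zeta>. f (\<zeta> j))"
    using assms by (intro integral_distr measurable_component_singleton)
  finally show ?thesis by simp
qed

lemma (in prob_space) prob_Int_trivial_event:
  assumes "B \<in> events" "C \<in> events" "prob B = 0 \<or> prob B = 1"
  shows "prob (C \<inter> B) = prob B * prob C"
  using assms(3)
proof
  assume "prob B = 0"
  moreover have "prob (C \<inter> B) \<le> prob B"
    using assms(1) by (intro finite_measure_mono) auto
  ultimately show ?thesis using measure_nonneg[of M "C \<inter> B"] by simp
next
  assume "prob B = 1"
  then have "AE x in M. x \<in> B"
    using prob_eq_1[OF assms(1)] by simp
  then have "AE x in M. x \<in> C \<inter> B \<longleftrightarrow> x \<in> C"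
    by eventually_elim auto
  then have "prob (C \<inter> B) = prob C"
    using assms(1,2) by (intro measure_eq_AE) auto
  with \<open>prob B = 1\<close> show ?thesis by simp
qed

lemma continuous_map_indicator_cylinder:
  assumes "finite J"
  shows "continuous_map Omega_top euclideanreal (indicator {\<omega>. \<forall>j\<in>J. \<omega> j \<in> E j})"
proof -
  have "continuous_map Omega_top euclideanreal (\<lambda>\<omega>. \<Prod>j\<in>J. indicator (E j) (\<omega> j))"
    unfolding Omega_top_def
    by (intro continuous_map_prod assms continuous_map_compose[OF continuous_map_product_projection,
          unfolded o_def]) auto
  moreover have "(\<Prod>j\<in>J. indicator (E j) (\<omega> j)) = (indicator {\<omega>. \<forall>j\<in>J. \<omega> j \<in> E j} \<omega> :: real)"
    for \<omega>
    using assms by (cases "\<forall>j\<in>J. \<omega> j \<in> E j")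
      (auto simp: prod_zero_iff indicator_eq_0_iff intro!: prod.neutral)
  ultimately show ?thesis by simp
qed

lemma M1_prob_space: "\<mu> \<in> M1 \<Longrightarrow> prob_space \<mu>"
  by (simp add: M1_def)

lemma sets_M1: "\<mu> \<in> M1 \<Longrightarrow> sets \<mu> = sets Fprod"
  by (simp add: M1_def)

lemma space_M1: "\<mu> \<in> M1 \<Longrightarrow> space \<mu> = UNIV"
  using sets_eq_imp_space_eq[OF sets_M1] by simp

lemma borel_measurable_M1:
  "\<mu> \<in> M1 \<Longrightarrow> (f :: ('v \<Rightarrow> 'a) \<Rightarrow> real) \<in> borel_measurable Fprod \<Longrightarrow> f \<in> borel_measurable \<mu>"
  using measurable_cong_sets[OF sets_M1 refl, of \<mu> "borel :: real measure"] by simp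

lemma topspace_weak_top: "topspace weak_top = M1"
proof -
  have "{\<mu> \<in> M1. integral\<^sup>L \<mu> (\<lambda>_. 0) \<in> UNIV} \<in> {{\<mu> \<in> M1. integral\<^sup>L \<mu> f \<in> U} | f U.
      continuous_map Omega_top euclideanreal f \<and> open U}"
    by (intro CollectI exI[of _ "\<lambda>_. 0 :: real"] exI[of _ UNIV] conjI refl) auto
  then show ?thesis
    unfolding weak_top_def topology_generated_by_topspace by auto
qed

lemma closedin_weak_top_integral_eq:
  assumes "continuous_map Omega_top euclideanreal f"
  shows "closedin weak_top {\<mu> \<in> M1. integral\<^sup>L \<mu> f = c}"
proof -
  have "openin weak_top {\<mu> \<in> M1. integral\<^sup>L \<mu> f \<in> - {c}}"
    unfolding weak_top_def
    by (intro topology_generated_by_Basis CollectI exI[of _ f] exI[of _ "- {c}"] conjI refl assms)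
      auto
  moreover have "M1 - {\<mu> \<in> M1. integral\<^sup>L \<mu> f = c} = {\<mu> \<in> M1. integral\<^sup>L \<mu> f \<in> - {c}}"
    by auto
  ultimately show ?thesis
    unfolding closedin_def topspace_weak_top by auto
qed

locale q_spec =
  fixes q :: nat and \<gamma> :: "'v::countable set \<Rightarrow> (nat \<Rightarrow> 'v \<Rightarrow> 'a::finite) \<Rightarrow> ('v \<Rightarrow> 'a) measure"
  assumes q_ge_1: "q \<ge> 1" and spec: "q_specification q \<gamma>"
begin

lemma prob_q_kernel_spec: "finite \<Lambda> \<Longrightarrow> prob_q_kernel q \<Lambda> (\<gamma> \<Lambda>)"
  using spec by (simp add: q_specification_def)

lemma proper_q_kernel_spec: "finite \<Lambda> \<Longrightarrow> proper_q_kernel q \<Lambda> (\<gamma> \<Lambda>)"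
  using spec by (simp add: q_specification_def)

lemma kernel_in_M1: "finite \<Lambda> \<Longrightarrow> \<eta> \<in> Omega_q q \<Longrightarrow> \<gamma> \<Lambda> \<eta> \<in> M1"
  using prob_q_kernel_spec by (simp add: prob_q_kernel_def M1_def)

lemma prob_space_kernel: "finite \<Lambda> \<Longrightarrow> \<eta> \<in> Omega_q q \<Longrightarrow> prob_space (\<gamma> \<Lambda> \<eta>)"
  using kernel_in_M1 M1_prob_space by blast

lemma emeasure_kernel_eq_measure:
  assumes "finite \<Lambda>" "\<eta> \<in> Omega_q q"
  shows "emeasure (\<gamma> \<Lambda> \<eta>) A = measure (\<gamma> \<Lambda> \<eta>) A"
  using prob_space.finite_measure[OF prob_space_kernel[OF assms]]
  by (rule finite_measure.emeasure_eq_measure)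

lemma sets_kernel: "finite \<Lambda> \<Longrightarrow> \<eta> \<in> Omega_q q \<Longrightarrow> sets (\<gamma> \<Lambda> \<eta>) = sets Fprod"
  using kernel_in_M1 sets_M1 by blast

lemma kernel_measurable:
  "finite \<Lambda> \<Longrightarrow> A \<in> sets Fprod \<Longrightarrow>
    (\<lambda>\<eta>. measure (\<gamma> \<Lambda> \<eta>) A) \<in> borel_measurable (PiM {..<q} (\<lambda>_. Fsub (- \<Lambda>)))"
  using prob_q_kernel_spec by (simp add: prob_q_kernel_def)

lemma kernel_proper:
  "finite \<Lambda> \<Longrightarrow> \<eta> \<in> Omega_q q \<Longrightarrow> A \<in> sets (Fsub (- \<Lambda>)) \<Longrightarrow>
    measure (\<gamma> \<Lambda> \<eta>) A = (1 / real q) * (\<Sum>i<q. indicator A (\<eta> i))"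
  using proper_q_kernel_spec by (simp add: proper_q_kernel_def)

lemma kernel_consistent:
  "finite \<Lambda> \<Longrightarrow> \<eta> \<in> Omega_q q \<Longrightarrow> A \<in> sets Fprod \<Longrightarrow>
    integral\<^sup>L (PiM {..<q} (\<lambda>_. \<gamma> \<Lambda> \<eta>)) (\<lambda>\<zeta>. measure (\<gamma> \<Lambda> \<zeta>) A) = measure (\<gamma> \<Lambda> \<eta>) A"
  using spec[unfolded q_specification_def kernel_comp_def, THEN conjunct2, rule_format, of \<Lambda> \<Lambda>]
  by simp

lemma kernel_local:
  assumes \<Lambda>: "finite \<Lambda>" and \<eta>: "\<eta> \<in> Omega_q q" and \<eta>': "\<eta>' \<in> Omega_q q"
    and fibers: "\<And>i. i < q \<Longrightarrow> \<eta>' i \<in> fiber \<Lambda> (\<eta> i)"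
  shows "\<gamma> \<Lambda> \<eta>' = \<gamma> \<Lambda> \<eta>"
proof (rule measure_eqI)
  show "sets (\<gamma> \<Lambda> \<eta>') = sets (\<gamma> \<Lambda> \<eta>)"
    using assms by (simp add: sets_kernel)
  fix A assume "A \<in> sets (\<gamma> \<Lambda> \<eta>')"
  then have A: "A \<in> sets Fprod" using sets_kernel[OF \<Lambda> \<eta>'] by simp
  have "measure (\<gamma> \<Lambda> \<eta>') A = measure (\<gamma> \<Lambda> \<eta>) A"
    using \<eta> \<eta>' fibers
    by (intro borel_measurable_PiM_Fsub_eq[OF kernel_measurable[OF \<Lambda> A]])
      (auto simp: Omega_q_def fiber_def)
  then show "emeasure (\<gamma> \<Lambda> \<eta>') A = emeasure (\<gamma> \<Lambda> \<eta>) A"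
    using assms by (simp add: emeasure_kernel_eq_measure)
qed

lemma space_PiM_M1: "\<mu> \<in> M1 \<Longrightarrow> space (PiM {..<q} (\<lambda>_. \<mu>)) = Omega_q q"
  by (simp add: space_PiM Omega_q_def space_M1)

lemma borel_measurable_PiM_M1:
  fixes F :: "(nat \<Rightarrow> 'v \<Rightarrow> 'a) \<Rightarrow> real"
  assumes "\<mu> \<in> M1" and "F \<in> borel_measurable (PiM {..<q} (\<lambda>_. Fprod))"
  shows "F \<in> borel_measurable (PiM {..<q} (\<lambda>_. \<mu>))"
proof -
  have "sets (PiM {..<q} (\<lambda>_. \<mu>)) = sets (PiM {..<q} (\<lambda>_. Fprod))"
    using assms(1) by (intro sets_PiM_cong) (auto simp: sets_M1)
  from measurable_cong_sets[OF this refl, where N = "borel :: real measure"] assms(2)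
  show ?thesis by simp
qed

lemma integrable_PiM_M1_bounded:
  fixes F :: "(nat \<Rightarrow> 'v \<Rightarrow> 'a) \<Rightarrow> real"
  assumes \<mu>: "\<mu> \<in> M1" and F: "F \<in> borel_measurable (PiM {..<q} (\<lambda>_. Fprod))"
    and bounded: "\<And>\<zeta>. \<zeta> \<in> Omega_q q \<Longrightarrow> \<bar>F \<zeta>\<bar> \<le> B"
  shows "integrable (PiM {..<q} (\<lambda>_. \<mu>)) F"
proof -
  interpret P: prob_space "PiM {..<q} (\<lambda>_. \<mu>)"
    using M1_prob_space[OF \<mu>] by (intro prob_space_PiM)
  show ?thesis
    using bounded borel_measurable_PiM_M1[OF \<mu> F]
    by (intro P.integrable_const_bound[where B=B]) (auto simp: space_PiM_M1[OF \<mu>])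
qed

section \<open>The kernel at constant tuples\<close>

definition diag :: "('v \<Rightarrow> 'a) \<Rightarrow> nat \<Rightarrow> 'v \<Rightarrow> 'a" where
  "diag \<omega> = (\<lambda>i\<in>{..<q}. \<omega>)"

lemma diag_in_Omega_q [simp]: "diag \<omega> \<in> Omega_q q"
  by (simp add: diag_def Omega_q_def)

lemma diag_apply [simp]: "i < q \<Longrightarrow> diag \<omega> i = \<omega>"
  by (simp add: diag_def)

lemma continuous_map_diag: "continuous_map Omega_top (Omega_q_top q) diag"
  unfolding Omega_q_top_def by (subst continuous_map_componentwise) (auto simp: diag_def)

definition diag_kernel :: "'v set \<Rightarrow> ('v \<Rightarrow> 'a) set \<Rightarrow> ('v \<Rightarrow> 'a) \<Rightarrow> real" where
  "diag_kernel \<Lambda> A \<omega> = measure (\<gamma> \<Lambda> (diag \<omega>)) A"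

definition avg_diag_kernel :: "'v set \<Rightarrow> ('v \<Rightarrow> 'a) set \<Rightarrow> (nat \<Rightarrow> 'v \<Rightarrow> 'a) \<Rightarrow> real" where
  "avg_diag_kernel \<Lambda> A \<eta> = (1 / real q) * (\<Sum>i<q. diag_kernel \<Lambda> A (\<eta> i))"

lemma diag_kernel_nonneg: "0 \<le> diag_kernel \<Lambda> A \<omega>"
  by (simp add: diag_kernel_def)

lemma diag_kernel_le_1: "finite \<Lambda> \<Longrightarrow> diag_kernel \<Lambda> A \<omega> \<le> 1"
  unfolding diag_kernel_def by (intro prob_space.prob_le_1 prob_space_kernel) auto

lemma avg_diag_kernel_nonneg: "0 \<le> avg_diag_kernel \<Lambda> A \<eta>"
  unfolding avg_diag_kernel_def by (intro mult_nonneg_nonneg sum_nonneg diag_kernel_nonneg) auto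

lemma avg_diag_kernel_le_1:
  assumes "finite \<Lambda>"
  shows "avg_diag_kernel \<Lambda> A \<eta> \<le> 1"
proof -
  have "(\<Sum>i<q. diag_kernel \<Lambda> A (\<eta> i)) \<le> (\<Sum>i<q. 1)"
    by (intro sum_mono diag_kernel_le_1[OF assms])
  then show ?thesis
    using q_ge_1 by (simp add: avg_diag_kernel_def field_simps)
qed

lemma diag_kernel_local:
  assumes "finite \<Lambda>" "\<omega>' \<in> fiber \<Lambda> \<omega>"
  shows "diag_kernel \<Lambda> A \<omega>' = diag_kernel \<Lambda> A \<omega>"
proof -
  have "\<gamma> \<Lambda> (diag \<omega>') = \<gamma> \<Lambda> (diag \<omega>)"
    using assms by (intro kernel_local) auto
  then show ?thesis by (simp add: diag_kernel_def)
qed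

lemma borel_measurable_diag_kernel:
  assumes "finite \<Lambda>" "A \<in> sets Fprod"
  shows "diag_kernel \<Lambda> A \<in> borel_measurable Fprod"
proof -
  have "diag \<in> measurable (Fsub (- \<Lambda>)) (PiM {..<q} (\<lambda>_. Fsub (- \<Lambda>)))"
    unfolding diag_def by (rule measurable_restrict) simp
  from measurable_compose[OF this kernel_measurable[OF assms]]
  have "(\<lambda>\<omega>. measure (\<gamma> \<Lambda> (diag \<omega>)) A) \<in> borel_measurable (Fsub (- \<Lambda>))" .
  from measurable_compose[OF measurable_id_Fprod_Fsub this] show ?thesis
    unfolding diag_kernel_def[abs_def] .
qed

lemma borel_measurable_diag_kernel_component:
  assumes "finite \<Lambda>" "A \<in> sets Fprod" "i < q"
  shows "(\<lambda>\<zeta>. diag_kernel \<Lambda> A (\<zeta> i)) \<in> borel_measurable (PiM {..<q} (\<lambda>_. Fprod))"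
  using measurable_compose[OF measurable_component_singleton[of i "{..<q}" "\<lambda>_. Fprod"]
      borel_measurable_diag_kernel[OF assms(1,2)]] assms(3) by simp

lemma borel_measurable_avg_diag_kernel:
  "finite \<Lambda> \<Longrightarrow> A \<in> sets Fprod \<Longrightarrow> avg_diag_kernel \<Lambda> A \<in> borel_measurable (PiM {..<q} (\<lambda>_. Fprod))"
  unfolding avg_diag_kernel_def
  by (intro borel_measurable_times borel_measurable_const borel_measurable_sum
      borel_measurable_diag_kernel_component) auto

lemma integral_PiM_avg_diag_kernel:
  assumes \<mu>: "\<mu> \<in> M1" and \<Lambda>: "finite \<Lambda>" and A: "A \<in> sets Fprod"
  shows "integral\<^sup>L (PiM {..<q} (\<lambda>_. \<mu>)) (avg_diag_kernel \<Lambda> A) = integral\<^sup>L \<mu> (diag_kernel \<Lambda> A)"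
proof -
  let ?P = "PiM {..<q} (\<lambda>_. \<mu>)"
  have "integrable ?P (\<lambda>\<zeta>. diag_kernel \<Lambda> A (\<zeta> i))" if "i < q" for i
    using that \<Lambda> diag_kernel_le_1
    by (intro integrable_PiM_M1_bounded[OF \<mu>, where B=1]
        borel_measurable_diag_kernel_component[OF \<Lambda> A])
      (auto simp: diag_kernel_nonneg)
  then have "integral\<^sup>L ?P (avg_diag_kernel \<Lambda> A)
      = (1 / real q) * (\<Sum>i<q. integral\<^sup>L ?P (\<lambda>\<zeta>. diag_kernel \<Lambda> A (\<zeta> i)))"
    unfolding avg_diag_kernel_def by (simp add: Bochner_Integration.integral_sum)
  also have "\<dots> = (1 / real q) * (\<Sum>i<q. integral\<^sup>L \<mu> (diag_kernel \<Lambda> A))"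
    using M1_prob_space[OF \<mu>] borel_measurable_M1[OF \<mu> borel_measurable_diag_kernel[OF \<Lambda> A]]
    by (simp add: integral_PiM_component)
  also have "\<dots> = integral\<^sup>L \<mu> (diag_kernel \<Lambda> A)"
    using q_ge_1 by simp
  finally show ?thesis .
qed

lemma AE_kernel_fibers:
  assumes \<Lambda>: "finite \<Lambda>" and \<eta>: "\<eta> \<in> Omega_q q"
  shows "AE \<omega> in \<gamma> \<Lambda> \<eta>. \<exists>i<q. \<omega> \<in> fiber \<Lambda> (\<eta> i)"
proof -
  interpret K: prob_space "\<gamma> \<Lambda> \<eta>" using prob_space_kernel[OF \<Lambda> \<eta>] .
  let ?U = "\<Union>i<q. fiber \<Lambda> (\<eta> i)"
  have U: "?U \<in> sets (Fsub (- \<Lambda>))"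
    by (intro sets.finite_UN fiber_in_Fsub) auto
  have "\<eta> i \<in> ?U" if "i < q" for i
    using that mem_fiber_self by blast
  then have "(\<Sum>i<q. indicator ?U (\<eta> i)) = (\<Sum>i<q. 1 :: real)"
    by (intro sum.cong refl) simp
  then have "measure (\<gamma> \<Lambda> \<eta>) ?U = 1"
    using kernel_proper[OF \<Lambda> \<eta> U] q_ge_1 by simp
  moreover have "?U \<in> sets (\<gamma> \<Lambda> \<eta>)"
    using U sets_Fsub_subset_Fprod sets_kernel[OF \<Lambda> \<eta>] by blast
  ultimately show ?thesis
    using K.prob_eq_1 by auto
qed

lemma kernel_fiber_ge:
  assumes \<Lambda>: "finite \<Lambda>" and \<eta>: "\<eta> \<in> Omega_q q" and i: "i < q"
  shows "1 / real q \<le> measure (\<gamma> \<Lambda> \<eta>) (fiber \<Lambda> (\<eta> i))"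
  using kernel_proper[OF \<Lambda> \<eta> fiber_in_Fsub] sum_indicator_fiber_ge_1[OF i, of \<Lambda> \<eta>] q_ge_1
  by (simp add: divide_right_mono)

lemma integral_kernel_local:
  assumes \<Lambda>: "finite \<Lambda>" and \<eta>: "\<eta> \<in> Omega_q q" and h: "h \<in> borel_measurable Fprod"
    and h_local: "\<And>\<omega> \<omega>'. \<omega>' \<in> fiber \<Lambda> \<omega> \<Longrightarrow> h \<omega>' = h \<omega>"
  shows "integral\<^sup>L (\<gamma> \<Lambda> \<eta>) h = (1 / real q) * (\<Sum>i<q. h (\<eta> i))"
proof -
  let ?K = "\<gamma> \<Lambda> \<eta>"
  let ?E = "\<lambda>i. fiber \<Lambda> (\<eta> i)"
  define n where "n i = (\<Sum>j<q. indicator (?E i) (\<eta> j) :: real)" for i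
  have measure_fiber: "measure ?K (?E i) = n i / real q" for i
    using kernel_proper[OF \<Lambda> \<eta> fiber_in_Fsub] by (simp add: n_def)
  have n_nonzero: "n i \<noteq> 0" if "i < q" for i
    using sum_indicator_fiber_ge_1[OF that, of \<Lambda> \<eta>] unfolding n_def by linarith
  have E_sets: "?E i \<in> sets ?K" for i
    using fiber_in_Fsub sets_Fsub_subset_Fprod sets_kernel[OF \<Lambda> \<eta>] by blast
  have "AE \<omega> in ?K. h \<omega> = (\<Sum>i<q. h (\<eta> i) / n i * indicator (?E i) \<omega>)"
    using AE_kernel_fibers[OF \<Lambda> \<eta>]
  proof eventually_elim
    case (elim \<omega>)
    then obtain k where "k < q" "\<omega> \<in> ?E k" by blast
    from local_eq_sum_fibers[where \<eta> = \<eta>, OF h_local this] show ?case by (simp add: n_def)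
  qed
  moreover have "h \<in> borel_measurable ?K"
    using h measurable_cong_sets[OF sets_kernel[OF \<Lambda> \<eta>] refl, of "borel :: real measure"] by simp
  ultimately have "integral\<^sup>L ?K h = integral\<^sup>L ?K (\<lambda>\<omega>. \<Sum>i<q. h (\<eta> i) / n i * indicator (?E i) \<omega>)"
    by (intro integral_cong_AE borel_measurable_sum borel_measurable_times borel_measurable_const
        borel_measurable_indicator E_sets)
  also have "\<dots> = (\<Sum>i<q. h (\<eta> i) / n i * measure ?K (?E i))"
    using E_sets emeasure_kernel_eq_measure[OF \<Lambda> \<eta>]
    by (subst Bochner_Integration.integral_sum) auto
  also have "\<dots> = (\<Sum>i<q. h (\<eta> i) / real q)"
    by (intro sum.cong refl) (simp add: measure_fiber n_nonzero)
  also have "\<dots> = (1 / real q) * (\<Sum>i<q. h (\<eta> i))"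
    by (simp add: sum_divide_distrib)
  finally show ?thesis .
qed

lemma integral_PiM_kernel_avg_diag_kernel:
  assumes \<Lambda>: "finite \<Lambda>" and A: "A \<in> sets Fprod" and \<eta>: "\<eta> \<in> Omega_q q"
  shows "integral\<^sup>L (PiM {..<q} (\<lambda>_. \<gamma> \<Lambda> \<eta>)) (avg_diag_kernel \<Lambda> A) = avg_diag_kernel \<Lambda> A \<eta>"
  using integral_PiM_avg_diag_kernel[OF kernel_in_M1[OF \<Lambda> \<eta>] \<Lambda> A]
    integral_kernel_local[OF \<Lambda> \<eta> borel_measurable_diag_kernel[OF \<Lambda> A] diag_kernel_local[OF \<Lambda>]]
  by (simp add: avg_diag_kernel_def)

section \<open>A maximum principle\<close>

text \<open>The tuples that the chain \<open>\<zeta> \<mapsto> \<gamma>\<^sub>\<Lambda>(\<cdot>|\<zeta>)\<^sup>\<otimes>\<^sup>q\<close> can reach from \<open>\<eta>\<close>.\<close>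

definition reachable :: "'v set \<Rightarrow> (nat \<Rightarrow> 'v \<Rightarrow> 'a) \<Rightarrow> (nat \<Rightarrow> 'v \<Rightarrow> 'a) set" where
  "reachable \<Lambda> \<eta> = {\<zeta> \<in> Omega_q q. \<forall>j<q. \<exists>i<q. \<zeta> j \<in> fiber \<Lambda> (\<eta> i)}"

lemma finite_image_reachable:
  assumes F_local: "\<And>\<zeta> \<zeta>'. \<zeta> \<in> Omega_q q \<Longrightarrow> \<zeta>' \<in> Omega_q q \<Longrightarrow>
      (\<And>i. i < q \<Longrightarrow> \<zeta>' i \<in> fiber \<Lambda> (\<zeta> i)) \<Longrightarrow> F \<zeta>' = F \<zeta>"
  shows "finite (F ` reachable \<Lambda> \<eta>)"
proof (rule finite_subset)
  show "F ` reachable \<Lambda> \<eta> \<subseteq> (\<lambda>s. F (\<lambda>j\<in>{..<q}. \<eta> (s j))) ` ({..<q} \<rightarrow>\<^sub>E {..<q})"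
  proof
    fix y assume "y \<in> F ` reachable \<Lambda> \<eta>"
    then obtain \<zeta> where \<zeta>: "\<zeta> \<in> reachable \<Lambda> \<eta>" and y: "y = F \<zeta>" by blast
    then have "\<forall>j. \<exists>i. j < q \<longrightarrow> i < q \<and> \<zeta> j \<in> fiber \<Lambda> (\<eta> i)"
      unfolding reachable_def by blast
    from choice[OF this] obtain s where s: "\<And>j. j < q \<Longrightarrow> s j < q \<and> \<zeta> j \<in> fiber \<Lambda> (\<eta> (s j))"
      by blast
    have s_PiE: "restrict s {..<q} \<in> {..<q} \<rightarrow>\<^sub>E {..<q}" using s by auto
    have "y = F (\<lambda>j\<in>{..<q}. \<eta> (restrict s {..<q} j))"
      using \<zeta> s unfolding y by (intro F_local) (auto simp: reachable_def Omega_q_def)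
    then show "y \<in> (\<lambda>s. F (\<lambda>j\<in>{..<q}. \<eta> (s j))) ` ({..<q} \<rightarrow>\<^sub>E {..<q})"
      by (rule image_eqI[OF _ s_PiE])
  qed
qed (intro finite_imageI finite_PiE; simp)

lemma AE_PiM_kernel_reachable:
  assumes \<Lambda>: "finite \<Lambda>" and \<zeta>: "\<zeta> \<in> reachable \<Lambda> \<eta>"
  shows "AE \<xi> in PiM {..<q} (\<lambda>_. \<gamma> \<Lambda> \<zeta>). \<xi> \<in> reachable \<Lambda> \<eta>"
proof -
  have \<zeta>_Omega: "\<zeta> \<in> Omega_q q" using \<zeta> by (simp add: reachable_def)
  have "AE \<xi> in PiM {..<q} (\<lambda>_. \<gamma> \<Lambda> \<zeta>). \<forall>j\<in>{..<q}. \<exists>i<q. \<xi> j \<in> fiber \<Lambda> (\<zeta> i)"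
    using prob_space_kernel[OF \<Lambda> \<zeta>_Omega]
    by (intro AE_finite_allI AE_PiM_component AE_kernel_fibers[OF \<Lambda> \<zeta>_Omega]) auto
  then show ?thesis
    using AE_space
  proof eventually_elim
    case (elim \<xi>)
    have "\<exists>k<q. \<xi> j \<in> fiber \<Lambda> (\<eta> k)" if j: "j < q" for j
    proof -
      obtain i where i: "i < q" "\<xi> j \<in> fiber \<Lambda> (\<zeta> i)" using elim(1) j by auto
      moreover obtain k where k: "k < q" "\<zeta> i \<in> fiber \<Lambda> (\<eta> k)"
        using \<zeta> i(1) unfolding reachable_def by blast
      ultimately show ?thesis using mem_fiber_trans[OF i(2) k(2)] by blast
    qed
    moreover have "\<xi> \<in> Omega_q q"
      using elim(2) space_PiM_M1[OF kernel_in_M1[OF \<Lambda> \<zeta>_Omega]] by simp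
    ultimately show ?case by (simp add: reachable_def)
  qed
qed

lemma PiM_kernel_fiber_pos:
  assumes \<Lambda>: "finite \<Lambda>" and \<zeta>: "\<zeta> \<in> Omega_q q"
  shows "0 < measure (PiM {..<q} (\<lambda>_. \<gamma> \<Lambda> \<zeta>)) (PiE {..<q} (\<lambda>_. fiber \<Lambda> (\<zeta> 0)))"
proof -
  let ?K = "\<gamma> \<Lambda> \<zeta>" and ?C = "fiber \<Lambda> (\<zeta> 0)"
  interpret K: prob_space ?K by (rule prob_space_kernel[OF \<Lambda> \<zeta>])
  have C: "?C \<in> sets ?K"
    using fiber_in_Fsub sets_Fsub_subset_Fprod sets_kernel[OF \<Lambda> \<zeta>] by blast
  have "emeasure (PiM {..<q} (\<lambda>_. ?K)) (PiE {..<q} (\<lambda>_. ?C))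
      = emeasure (PiM {..<q} (\<lambda>_. ?K)) (prod_emb {..<q} (\<lambda>_. ?K) {..<q} (PiE {..<q} (\<lambda>_. ?C)))"
    using sets.sets_into_space[OF C] by simp
  also have "\<dots> = (\<Prod>i<q. emeasure ?K ?C)"
    by (rule emeasure_PiM_emb) (use K.prob_space_axioms C in auto)
  also have "\<dots> = ennreal (measure ?K ?C ^ q)"
    by (simp add: K.emeasure_eq_measure ennreal_power)
  finally have "measure (PiM {..<q} (\<lambda>_. ?K)) (PiE {..<q} (\<lambda>_. ?C)) = measure ?K ?C ^ q"
    by (simp add: measure_def)
  moreover have "0 < measure ?K ?C"
  proof -
    have "0 < 1 / real q" using q_ge_1 by simp
    also have "\<dots> \<le> measure ?K ?C" using kernel_fiber_ge[OF \<Lambda> \<zeta>, of 0] q_ge_1 by simp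
    finally show ?thesis .
  qed
  ultimately show ?thesis by simp
qed

lemma AE_PiM_kernel_le_max:
  fixes F :: "(nat \<Rightarrow> 'v \<Rightarrow> 'a) \<Rightarrow> real"
  assumes \<Lambda>: "finite \<Lambda>"
    and F_local: "\<And>\<zeta> \<zeta>'. \<zeta> \<in> Omega_q q \<Longrightarrow> \<zeta>' \<in> Omega_q q \<Longrightarrow>
      (\<And>i. i < q \<Longrightarrow> \<zeta>' i \<in> fiber \<Lambda> (\<zeta> i)) \<Longrightarrow> F \<zeta>' = F \<zeta>"
    and F_diag: "\<And>\<omega>. F (diag \<omega>) = 0"
    and \<zeta>: "\<zeta> \<in> reachable \<Lambda> \<eta>" and max: "\<And>\<xi>. \<xi> \<in> reachable \<Lambda> \<eta> \<Longrightarrow> F \<xi> \<le> F \<zeta>"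
  shows "AE \<xi> in PiM {..<q} (\<lambda>_. \<gamma> \<Lambda> \<zeta>).
    F \<xi> \<le> F \<zeta> - F \<zeta> * indicator (PiE {..<q} (\<lambda>_. fiber \<Lambda> (\<zeta> 0))) \<xi>"
  using AE_PiM_kernel_reachable[OF \<Lambda> \<zeta>]
proof eventually_elim
  case (elim \<xi>)
  show ?case
  proof (cases "\<xi> \<in> PiE {..<q} (\<lambda>_. fiber \<Lambda> (\<zeta> 0))")
    case True
    then have "F \<xi> = F (diag (\<zeta> 0))"
      using elim by (intro F_local) (auto simp: reachable_def PiE_iff)
    then show ?thesis using True F_diag by simp
  next
    case False
    then show ?thesis using max[OF elim] by simp
  qed
qed

text \<open>Take \<open>\<zeta>\<close> maximising \<open>F\<close> over the reachable tuples. Harmonicity at \<open>\<zeta>\<close>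
  averages \<open>F\<close> over reachable tuples, and with positive probability over tuples inside the fiber of
  \<open>\<zeta> 0\<close>, where \<open>F = 0\<close>; so the maximum cannot be positive.\<close>

lemma harmonic_le_0:
  fixes F :: "(nat \<Rightarrow> 'v \<Rightarrow> 'a) \<Rightarrow> real"
  assumes \<Lambda>: "finite \<Lambda>" and F_meas: "F \<in> borel_measurable (PiM {..<q} (\<lambda>_. Fprod))"
    and F_bounded: "\<And>\<zeta>. \<zeta> \<in> Omega_q q \<Longrightarrow> \<bar>F \<zeta>\<bar> \<le> B"
    and F_harmonic: "\<And>\<zeta>. \<zeta> \<in> Omega_q q \<Longrightarrow> integral\<^sup>L (PiM {..<q} (\<lambda>_. \<gamma> \<Lambda> \<zeta>)) F = F \<zeta>"
    and F_local: "\<And>\<zeta> \<zeta>'. \<zeta> \<in> Omega_q q \<Longrightarrow> \<zeta>' \<in> Omega_q q \<Longrightarrow>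
      (\<And>i. i < q \<Longrightarrow> \<zeta>' i \<in> fiber \<Lambda> (\<zeta> i)) \<Longrightarrow> F \<zeta>' = F \<zeta>"
    and F_diag: "\<And>\<omega>. F (diag \<omega>) = 0"
    and \<eta>: "\<eta> \<in> Omega_q q"
  shows "F \<eta> \<le> 0"
proof -
  let ?R = "reachable \<Lambda> \<eta>"
  have "\<eta> \<in> ?R" using \<eta> by (auto simp: reachable_def)
  have finite: "finite (F ` ?R)" by (rule finite_image_reachable[OF F_local])
  have "Max (F ` ?R) \<in> F ` ?R"
    using \<open>\<eta> \<in> ?R\<close> by (intro Max_in[OF finite]) auto
  then obtain \<zeta> where \<zeta>: "\<zeta> \<in> ?R" and "F \<zeta> = Max (F ` ?R)"
    by (metis imageE)
  then have max: "\<And>\<xi>. \<xi> \<in> ?R \<Longrightarrow> F \<xi> \<le> F \<zeta>"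
    using Max_ge[OF finite] by auto
  have \<zeta>_Omega: "\<zeta> \<in> Omega_q q" using \<zeta> by (simp add: reachable_def)
  let ?P = "PiM {..<q} (\<lambda>_. \<gamma> \<Lambda> \<zeta>)"
  interpret P: prob_space ?P
    using prob_space_kernel[OF \<Lambda> \<zeta>_Omega] by (intro prob_space_PiM)
  define T where "T = PiE {..<q} (\<lambda>_. fiber \<Lambda> (\<zeta> 0))"
  have T: "T \<in> sets ?P"
    unfolding T_def using fiber_in_Fsub sets_Fsub_subset_Fprod sets_kernel[OF \<Lambda> \<zeta>_Omega]
    by (intro sets_PiM_I_finite) auto
  have AE_bound: "AE \<xi> in ?P. F \<xi> \<le> F \<zeta> - F \<zeta> * indicator T \<xi>"
    unfolding T_def by (rule AE_PiM_kernel_le_max[OF \<Lambda> F_local F_diag \<zeta> max])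
  have integrable_F: "integrable ?P F"
    by (rule integrable_PiM_M1_bounded[OF kernel_in_M1[OF \<Lambda> \<zeta>_Omega] F_meas F_bounded])
  have indicator_T: "integrable ?P (indicator T :: _ \<Rightarrow> real)"
    using T by (intro integrable_real_indicator) (auto simp: P.emeasure_eq_measure)
  then have "integrable ?P (\<lambda>\<xi>. F \<zeta> - F \<zeta> * indicator T \<xi>)"
    by (intro Bochner_Integration.integrable_diff P.integrable_const integrable_mult_right)
  from integral_mono_AE[OF integrable_F this AE_bound]
  have "integral\<^sup>L ?P F \<le> integral\<^sup>L ?P (\<lambda>\<xi>. F \<zeta> - F \<zeta> * indicator T \<xi>)" .
  also have "\<dots> = F \<zeta> - F \<zeta> * measure ?P T"
    using T sets.sets_into_space[OF T]
    by (subst Bochner_Integration.integral_diff[OF P.integrable_const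
          integrable_mult_right[OF indicator_T]])
      (simp add: P.prob_space Int_absorb2)
  finally have "F \<zeta> * measure ?P T \<le> 0"
    using F_harmonic[OF \<zeta>_Omega] by simp
  then have "F \<zeta> \<le> 0"
    using PiM_kernel_fiber_pos[OF \<Lambda> \<zeta>_Omega] by (simp add: T_def mult_le_0_iff)
  then show ?thesis using max[OF \<open>\<eta> \<in> ?R\<close>] by linarith
qed

lemma harmonic_eq_0:
  fixes F :: "(nat \<Rightarrow> 'v \<Rightarrow> 'a) \<Rightarrow> real"
  assumes \<Lambda>: "finite \<Lambda>" and F_meas: "F \<in> borel_measurable (PiM {..<q} (\<lambda>_. Fprod))"
    and F_bounded: "\<And>\<zeta>. \<zeta> \<in> Omega_q q \<Longrightarrow> \<bar>F \<zeta>\<bar> \<le> B"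
    and F_harmonic: "\<And>\<zeta>. \<zeta> \<in> Omega_q q \<Longrightarrow> integral\<^sup>L (PiM {..<q} (\<lambda>_. \<gamma> \<Lambda> \<zeta>)) F = F \<zeta>"
    and F_local: "\<And>\<zeta> \<zeta>'. \<zeta> \<in> Omega_q q \<Longrightarrow> \<zeta>' \<in> Omega_q q \<Longrightarrow>
      (\<And>i. i < q \<Longrightarrow> \<zeta>' i \<in> fiber \<Lambda> (\<zeta> i)) \<Longrightarrow> F \<zeta>' = F \<zeta>"
    and F_diag: "\<And>\<omega>. F (diag \<omega>) = 0"
    and \<eta>: "\<eta> \<in> Omega_q q"
  shows "F \<eta> = 0"
proof -
  have "F \<eta> \<le> 0"
    by (rule harmonic_le_0[OF assms])
  moreover have "- F \<eta> \<le> 0"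
  proof (rule harmonic_le_0[OF \<Lambda>, where F = "\<lambda>\<zeta>. - F \<zeta>" and B = B])
    show "(\<lambda>\<zeta>. - F \<zeta>) \<in> borel_measurable (PiM {..<q} (\<lambda>_. Fprod))"
      using F_meas by (rule borel_measurable_uminus)
    show "\<bar>- F \<zeta>\<bar> \<le> B" if "\<zeta> \<in> Omega_q q" for \<zeta>
      using F_bounded[OF that] by simp
    show "integral\<^sup>L (PiM {..<q} (\<lambda>_. \<gamma> \<Lambda> \<zeta>)) (\<lambda>\<zeta>. - F \<zeta>) = - F \<zeta>"
      if "\<zeta> \<in> Omega_q q" for \<zeta>
      using F_harmonic[OF that] by simp
    show "- F \<zeta>' = - F \<zeta>"
      if "\<zeta> \<in> Omega_q q" "\<zeta>' \<in> Omega_q q" "\<And>i. i < q \<Longrightarrow> \<zeta>' i \<in> fiber \<Lambda> (\<zeta> i)" for \<zeta> \<zeta>'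
      using F_local[OF that] by simp
    show "- F (diag \<omega>) = 0" for \<omega>
      using F_diag by simp
  qed (rule \<eta>)
  ultimately show ?thesis by simp
qed

lemma kernel_eq_avg_diag_kernel:
  assumes \<Lambda>: "finite \<Lambda>" and A: "A \<in> sets Fprod" and \<eta>: "\<eta> \<in> Omega_q q"
  shows "measure (\<gamma> \<Lambda> \<eta>) A = avg_diag_kernel \<Lambda> A \<eta>"
proof -
  define F where "F \<zeta> = measure (\<gamma> \<Lambda> \<zeta>) A - avg_diag_kernel \<Lambda> A \<zeta>" for \<zeta>
  have "F \<eta> = 0"
  proof (rule harmonic_eq_0[OF \<Lambda> _ _ _ _ _ \<eta>, where B=1])
    show "F \<in> borel_measurable (PiM {..<q} (\<lambda>_. Fprod))"
      unfolding F_def[abs_def]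
      by (intro borel_measurable_diff borel_measurable_avg_diag_kernel[OF \<Lambda> A]
          borel_measurable_PiM_Fsub_imp_Fprod[OF kernel_measurable[OF \<Lambda> A]])
    show "\<bar>F \<zeta>\<bar> \<le> 1" if "\<zeta> \<in> Omega_q q" for \<zeta>
      using prob_space.prob_le_1[OF prob_space_kernel[OF \<Lambda> that], of A]
        avg_diag_kernel_le_1[OF \<Lambda>, of A \<zeta>]
        avg_diag_kernel_nonneg[of \<Lambda> A \<zeta>] measure_nonneg[of "\<gamma> \<Lambda> \<zeta>" A]
      unfolding F_def abs_le_iff by linarith
    show "integral\<^sup>L (PiM {..<q} (\<lambda>_. \<gamma> \<Lambda> \<zeta>)) F = F \<zeta>" if \<zeta>: "\<zeta> \<in> Omega_q q" for \<zeta>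
    proof -
      have "integrable (PiM {..<q} (\<lambda>_. \<gamma> \<Lambda> \<zeta>)) (\<lambda>\<xi>. measure (\<gamma> \<Lambda> \<xi>) A)"
        using prob_space.prob_le_1[OF prob_space_kernel[OF \<Lambda>]]
        by (intro integrable_PiM_M1_bounded[OF kernel_in_M1[OF \<Lambda> \<zeta>], where B=1]
            borel_measurable_PiM_Fsub_imp_Fprod[OF kernel_measurable[OF \<Lambda> A]]) auto
      moreover have "integrable (PiM {..<q} (\<lambda>_. \<gamma> \<Lambda> \<zeta>)) (avg_diag_kernel \<Lambda> A)"
        using avg_diag_kernel_le_1[OF \<Lambda>] avg_diag_kernel_nonneg
        by (intro integrable_PiM_M1_bounded[OF kernel_in_M1[OF \<Lambda> \<zeta>], where B=1]
            borel_measurable_avg_diag_kernel[OF \<Lambda> A]) auto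
      ultimately show ?thesis
        unfolding F_def[abs_def]
        by (simp add: kernel_consistent[OF \<Lambda> \<zeta> A] integral_PiM_kernel_avg_diag_kernel[OF \<Lambda> A \<zeta>])
    qed
    show "F \<zeta>' = F \<zeta>"
      if "\<zeta> \<in> Omega_q q" "\<zeta>' \<in> Omega_q q" "\<And>i. i < q \<Longrightarrow> \<zeta>' i \<in> fiber \<Lambda> (\<zeta> i)" for \<zeta> \<zeta>'
    proof -
      have "(\<Sum>i<q. diag_kernel \<Lambda> A (\<zeta>' i)) = (\<Sum>i<q. diag_kernel \<Lambda> A (\<zeta> i))"
        using that(3) by (intro sum.cong refl diag_kernel_local[OF \<Lambda>]) auto
      then show ?thesis
        using kernel_local[OF \<Lambda> that] by (simp add: F_def avg_diag_kernel_def)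
    qed
    show "F (diag \<omega>) = 0" for \<omega>
      using q_ge_1 by (simp add: F_def avg_diag_kernel_def diag_kernel_def)
  qed
  then show ?thesis by (simp add: F_def)
qed

lemma integral_PiM_kernel_eq_integral_diag_kernel:
  assumes \<mu>: "\<mu> \<in> M1" and \<Lambda>: "finite \<Lambda>" and A: "A \<in> sets Fprod"
  shows "integral\<^sup>L (PiM {..<q} (\<lambda>_. \<mu>)) (\<lambda>\<eta>. measure (\<gamma> \<Lambda> \<eta>) A) = integral\<^sup>L \<mu> (diag_kernel \<Lambda> A)"
proof -
  have "integral\<^sup>L (PiM {..<q} (\<lambda>_. \<mu>)) (\<lambda>\<eta>. measure (\<gamma> \<Lambda> \<eta>) A)
      = integral\<^sup>L (PiM {..<q} (\<lambda>_. \<mu>)) (avg_diag_kernel \<Lambda> A)"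
    by (intro Bochner_Integration.integral_cong refl)
      (simp add: space_PiM_M1[OF \<mu>] kernel_eq_avg_diag_kernel[OF \<Lambda> A])
  also have "\<dots> = integral\<^sup>L \<mu> (diag_kernel \<Lambda> A)"
    by (rule integral_PiM_avg_diag_kernel[OF \<mu> \<Lambda> A])
  finally show ?thesis .
qed

section \<open>Reduction to cylinder sets\<close>

lemma diag_kernel_in_prob_algebra:
  "finite \<Lambda> \<Longrightarrow> (\<lambda>\<omega>. \<gamma> \<Lambda> (diag \<omega>)) \<in> measurable Fprod (prob_algebra Fprod)"
proof (rule measurable_prob_algebra_generated[where \<Omega>=UNIV and G="sets Fprod"])
  assume \<Lambda>: "finite \<Lambda>"
  show "sets Fprod = sigma_sets UNIV (sets (Fprod :: ('v \<Rightarrow> 'a) measure))"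
    using sets.sigma_sets_eq[of "Fprod :: ('v \<Rightarrow> 'a) measure"] by simp
  show "prob_space (\<gamma> \<Lambda> (diag \<omega>))" "sets (\<gamma> \<Lambda> (diag \<omega>)) = sets Fprod" for \<omega>
    using prob_space_kernel[OF \<Lambda>] sets_kernel[OF \<Lambda>] by auto
  fix B :: "('v \<Rightarrow> 'a) set" assume "B \<in> sets Fprod"
  then have "(\<lambda>\<omega>. ennreal (diag_kernel \<Lambda> B \<omega>)) \<in> borel_measurable Fprod"
    using borel_measurable_diag_kernel[OF \<Lambda>] by simp
  then show "(\<lambda>\<omega>. emeasure (\<gamma> \<Lambda> (diag \<omega>)) B) \<in> borel_measurable Fprod"
    using emeasure_kernel_eq_measure[OF \<Lambda>]
    by (simp add: diag_kernel_def)
qed (auto simp: Int_stable_def)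

lemma emeasure_bind_diag_kernel:
  assumes \<mu>: "\<mu> \<in> M1" and \<Lambda>: "finite \<Lambda>" and B: "B \<in> sets Fprod"
  shows "emeasure (\<mu> \<bind> (\<lambda>\<omega>. \<gamma> \<Lambda> (diag \<omega>))) B = ennreal (integral\<^sup>L \<mu> (diag_kernel \<Lambda> B))"
proof -
  interpret M: prob_space \<mu> using M1_prob_space[OF \<mu>] .
  have "\<mu> \<in> space (prob_algebra Fprod)"
    using sets_M1[OF \<mu>] M.prob_space_axioms by (simp add: space_prob_algebra)
  then have "emeasure (\<mu> \<bind> (\<lambda>\<omega>. \<gamma> \<Lambda> (diag \<omega>))) B = (\<integral>\<^sup>+\<omega>. emeasure (\<gamma> \<Lambda> (diag \<omega>)) B \<partial>\<mu>)"
    by (rule emeasure_bind_prob_algebra[OF _ diag_kernel_in_prob_algebra[OF \<Lambda>] B])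
  also have "\<dots> = (\<integral>\<^sup>+\<omega>. ennreal (diag_kernel \<Lambda> B \<omega>) \<partial>\<mu>)"
    using emeasure_kernel_eq_measure[OF \<Lambda>]
    by (simp add: diag_kernel_def)
  also have "\<dots> = ennreal (integral\<^sup>L \<mu> (diag_kernel \<Lambda> B))"
    using diag_kernel_le_1[OF \<Lambda>] diag_kernel_nonneg
      borel_measurable_M1[OF \<mu> borel_measurable_diag_kernel[OF \<Lambda> B]]
    by (intro nn_integral_eq_integral M.integrable_const_bound[where B=1]) auto
  finally show ?thesis .
qed

lemma integral_diag_kernel_eq_measure_if_cylinders:
  assumes \<mu>: "\<mu> \<in> M1" and \<Lambda>: "finite \<Lambda>"
    and cylinders_eq: "\<And>A. A \<in> cylinders \<Longrightarrow> integral\<^sup>L \<mu> (diag_kernel \<Lambda> A) = measure \<mu> A"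
    and A: "A \<in> sets Fprod"
  shows "integral\<^sup>L \<mu> (diag_kernel \<Lambda> A) = measure \<mu> A"
proof -
  interpret M: prob_space \<mu> using M1_prob_space[OF \<mu>] .
  let ?\<nu> = "\<mu> \<bind> (\<lambda>\<omega>. \<gamma> \<Lambda> (diag \<omega>))"
  have "?\<nu> = \<mu>"
  proof (rule measure_eqI_generator_eq_countable[where E=cylinders and \<Omega>=UNIV and A="{UNIV}"])
    show "Int_stable cylinders" by (rule Int_stable_prod_algebra)
    show "sets ?\<nu> = sigma_sets UNIV cylinders"
      using sets_bind'[OF _ diag_kernel_in_prob_algebra[OF \<Lambda>], of \<mu>] M.prob_space_axioms
        sets_M1[OF \<mu>]
      by (simp add: space_prob_algebra sets_Fprod_eq_sigma_cylinders)
    show "sets \<mu> = sigma_sets UNIV cylinders"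
      using sets_M1[OF \<mu>] sets_Fprod_eq_sigma_cylinders by simp
    show "emeasure ?\<nu> X = emeasure \<mu> X" if "X \<in> cylinders" for X
      using that cylinders_subset_sets_Fprod emeasure_bind_diag_kernel[OF \<mu> \<Lambda>] cylinders_eq[OF that]
      by (auto simp: M.emeasure_eq_measure)
    show "emeasure ?\<nu> a \<noteq> \<infinity>" if "a \<in> {UNIV}" for a
      using that emeasure_bind_diag_kernel[OF \<mu> \<Lambda> sets.top[of "Fprod :: ('v \<Rightarrow> 'a) measure"]] by simp
  qed (use UNIV_in_cylinders in auto)
  then show ?thesis
    using emeasure_bind_diag_kernel[OF \<mu> \<Lambda> A] M.emeasure_eq_measure
      Bochner_Integration.integral_nonneg[of \<mu> "diag_kernel \<Lambda> A", OF diag_kernel_nonneg]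
    by simp
qed

lemma mem_Gq_iff_cylinders:
  "\<mu> \<in> Gq q \<gamma> \<longleftrightarrow>
    \<mu> \<in> M1 \<and> (\<forall>\<Lambda>. finite \<Lambda> \<longrightarrow> (\<forall>A\<in>cylinders. integral\<^sup>L \<mu> (diag_kernel \<Lambda> A) = measure \<mu> A))"
proof (cases "\<mu> \<in> M1")
  case True
  have "(\<forall>A\<in>sets Fprod. integral\<^sup>L (PiM {..<q} (\<lambda>_. \<mu>)) (\<lambda>\<eta>. measure (\<gamma> \<Lambda> \<eta>) A) = measure \<mu> A)
      \<longleftrightarrow> (\<forall>A\<in>cylinders. integral\<^sup>L \<mu> (diag_kernel \<Lambda> A) = measure \<mu> A)"
    if \<Lambda>: "finite \<Lambda>" for \<Lambda>
  proof
    assume "\<forall>A\<in>sets Fprod. integral\<^sup>L (PiM {..<q} (\<lambda>_. \<mu>)) (\<lambda>\<eta>. measure (\<gamma> \<Lambda> \<eta>) A) = measure \<mu> A"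
    then show "\<forall>A\<in>cylinders. integral\<^sup>L \<mu> (diag_kernel \<Lambda> A) = measure \<mu> A"
      using integral_PiM_kernel_eq_integral_diag_kernel[OF True \<Lambda>] cylinders_subset_sets_Fprod
      by auto
  next
    assume "\<forall>A\<in>cylinders. integral\<^sup>L \<mu> (diag_kernel \<Lambda> A) = measure \<mu> A"
    then show "\<forall>A\<in>sets Fprod. integral\<^sup>L (PiM {..<q} (\<lambda>_. \<mu>)) (\<lambda>\<eta>. measure (\<gamma> \<Lambda> \<eta>) A) = measure \<mu> A"
      using integral_PiM_kernel_eq_integral_diag_kernel[OF True \<Lambda>]
        integral_diag_kernel_eq_measure_if_cylinders[OF True \<Lambda>] by auto
  qed
  then show ?thesis
    unfolding Gq_def by auto
qed (simp add: Gq_def)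

lemma integral_diag_kernel_minus_indicator:
  assumes \<mu>: "\<mu> \<in> M1" and \<Lambda>: "finite \<Lambda>" and A: "A \<in> sets Fprod"
  shows "integral\<^sup>L \<mu> (\<lambda>\<omega>. diag_kernel \<Lambda> A \<omega> - indicator A \<omega>)
    = integral\<^sup>L \<mu> (diag_kernel \<Lambda> A) - measure \<mu> A"
proof -
  interpret M: prob_space \<mu> using M1_prob_space[OF \<mu>] .
  have "integrable \<mu> (diag_kernel \<Lambda> A)"
    using diag_kernel_le_1[OF \<Lambda>] diag_kernel_nonneg
      borel_measurable_M1[OF \<mu> borel_measurable_diag_kernel[OF \<Lambda> A]]
    by (intro M.integrable_const_bound[where B=1]) auto
  then show ?thesis
    using A sets_M1[OF \<mu>] space_M1[OF \<mu>]
    by (simp add: Bochner_Integration.integral_diff M.emeasure_eq_measure)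
qed

lemma Gq_eq_INT_cylinders:
  "Gq q \<gamma> = (\<Inter>(\<Lambda>, A) \<in> {\<Lambda>. finite \<Lambda>} \<times> cylinders.
      {\<mu> \<in> M1. integral\<^sup>L \<mu> (\<lambda>\<omega>. diag_kernel \<Lambda> A \<omega> - indicator A \<omega>) = 0})"
proof -
  show ?thesis
  proof (intro set_eqI iffI)
    fix \<mu> assume "\<mu> \<in> Gq q \<gamma>"
    then have "\<mu> \<in> M1"
      and "\<And>\<Lambda> A. finite \<Lambda> \<Longrightarrow> A \<in> cylinders \<Longrightarrow> integral\<^sup>L \<mu> (diag_kernel \<Lambda> A) = measure \<mu> A"
      by (auto simp: mem_Gq_iff_cylinders)
    then show "\<mu> \<in> (\<Inter>(\<Lambda>, A) \<in> {\<Lambda>. finite \<Lambda>} \<times> cylinders.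
        {\<mu> \<in> M1. integral\<^sup>L \<mu> (\<lambda>\<omega>. diag_kernel \<Lambda> A \<omega> - indicator A \<omega>) = 0})"
      using cylinders_subset_sets_Fprod by (auto simp: integral_diag_kernel_minus_indicator)
  next
    fix \<mu> assume \<mu>: "\<mu> \<in> (\<Inter>(\<Lambda>, A) \<in> {\<Lambda>. finite \<Lambda>} \<times> cylinders.
        {\<mu> \<in> M1. integral\<^sup>L \<mu> (\<lambda>\<omega>. diag_kernel \<Lambda> A \<omega> - indicator A \<omega>) = 0})"
    then have "\<mu> \<in> M1" using UNIV_in_cylinders by blast
    moreover have "integral\<^sup>L \<mu> (diag_kernel \<Lambda> A) = measure \<mu> A"
      if \<Lambda>: "finite \<Lambda>" and A: "A \<in> cylinders" for \<Lambda> A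
    proof -
      have "integral\<^sup>L \<mu> (\<lambda>\<omega>. diag_kernel \<Lambda> A \<omega> - indicator A \<omega>) = 0"
        using \<mu> \<Lambda> A by blast
      then show ?thesis
        using integral_diag_kernel_minus_indicator[OF \<open>\<mu> \<in> M1\<close> \<Lambda>] A cylinders_subset_sets_Fprod
        by auto
    qed
    ultimately show "\<mu> \<in> Gq q \<gamma>"
      by (simp add: mem_Gq_iff_cylinders)
  qed
qed

lemma diag_kernel_cylinder:
  assumes \<Lambda>: "finite \<Lambda>"
  shows "diag_kernel \<Lambda> {\<omega>. \<forall>j\<in>J. \<omega> j \<in> E j} \<omega>
    = indicator {\<omega>. \<forall>j\<in>J - \<Lambda>. \<omega> j \<in> E j} \<omega> * measure (\<gamma> \<Lambda> (diag \<omega>)) {\<omega>. \<forall>j\<in>J \<inter> \<Lambda>. \<omega> j \<in> E j}"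
proof -
  let ?B = "{\<omega>. \<forall>j\<in>J - \<Lambda>. \<omega> j \<in> E j}" and ?C = "{\<omega>. \<forall>j\<in>J \<inter> \<Lambda>. \<omega> j \<in> E j}"
  interpret K: prob_space "\<gamma> \<Lambda> (diag \<omega>)" using prob_space_kernel[OF \<Lambda>] by simp
  have B: "?B \<in> sets (Fsub (- \<Lambda>))" and C: "?C \<in> sets (Fsub \<Lambda>)"
    by (auto intro: cylinder_in_Fsub)
  then have "?B \<in> K.events" "?C \<in> K.events"
    using sets_Fsub_subset_Fprod sets_kernel[OF \<Lambda>] by auto
  moreover have "K.prob ?B = indicator ?B \<omega>"
    using kernel_proper[OF \<Lambda> diag_in_Omega_q B] q_ge_1 by simp
  moreover have "{\<omega>. \<forall>j\<in>J. \<omega> j \<in> E j} = ?C \<inter> ?B" by auto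
  ultimately show ?thesis
    unfolding diag_kernel_def by (simp add: K.prob_Int_trivial_event indicator_def)
qed

lemma continuous_map_diag_kernel_cylinder:
  assumes quasilocal: "quasilocal q \<gamma>" and \<Lambda>: "finite \<Lambda>" and J: "finite J"
  shows "continuous_map Omega_top euclideanreal (diag_kernel \<Lambda> {\<omega>. \<forall>j\<in>J. \<omega> j \<in> E j})"
proof -
  let ?C = "{\<omega>. \<forall>j\<in>J \<inter> \<Lambda>. \<omega> j \<in> E j}"
  have "?C \<in> sets (Fsub \<Lambda>)" by (auto intro: cylinder_in_Fsub)
  then have "continuous_map (Omega_q_top q) euclideanreal (\<lambda>\<eta>. measure (\<gamma> \<Lambda> \<eta>) ?C)"
    using quasilocal \<Lambda> unfolding quasilocal_def by blast
  from continuous_map_compose[OF continuous_map_diag this]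
  have "continuous_map Omega_top euclideanreal (\<lambda>\<omega>. measure (\<gamma> \<Lambda> (diag \<omega>)) ?C)"
    by (simp add: o_def)
  moreover have "diag_kernel \<Lambda> {\<omega>. \<forall>j\<in>J. \<omega> j \<in> E j}
      = (\<lambda>\<omega>. indicator {\<omega>. \<forall>j\<in>J - \<Lambda>. \<omega> j \<in> E j} \<omega> * measure (\<gamma> \<Lambda> (diag \<omega>)) ?C)"
    by (rule ext) (rule diag_kernel_cylinder[OF \<Lambda>])
  ultimately show ?thesis
    using J by (auto intro!: continuous_map_real_mult continuous_map_indicator_cylinder)
qed

end

theorem mainTheorem6:
  fixes q :: nat
    and \<gamma> :: "'v::countable set \<Rightarrow> (nat \<Rightarrow> 'v \<Rightarrow> 'a::finite) \<Rightarrow> ('v \<Rightarrow> 'a) measure"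
  assumes "q \<ge> 1"
    and "q_specification q \<gamma>"
    and "quasilocal q \<gamma>"
  shows "closedin weak_top (Gq q \<gamma>)"
proof -
  interpret q_spec q \<gamma> using assms(1,2) by unfold_locales
  have "({}, UNIV) \<in> {\<Lambda>. finite \<Lambda>} \<times> cylinders"
    using UNIV_in_cylinders by simp
  moreover have "closedin weak_top
      {\<mu> \<in> M1. integral\<^sup>L \<mu> (\<lambda>\<omega>. diag_kernel \<Lambda> A \<omega> - indicator A \<omega>) = 0}"
    if "finite \<Lambda>" "A \<in> cylinders" for \<Lambda> A
  proof -
    obtain J E where "finite J" "A = {\<omega>. \<forall>j\<in>J. \<omega> j \<in> E j}"
      using cylindersE[OF \<open>A \<in> cylinders\<close>] .
    then show ?thesis
      using that assms(3)
      by (auto intro!: closedin_weak_top_integral_eq continuous_map_diff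
          continuous_map_diag_kernel_cylinder continuous_map_indicator_cylinder)
  qed
  ultimately show ?thesis
    unfolding Gq_eq_INT_cylinders by (intro closedin_INT) auto
qed

end
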